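(* Let $k\ge 3$ be an integer and let $G=(G_1,v_1,e_1)\Delta(G_2,v_2,e_2)$ be a Hajós join of two hypergraphs $G_1$ and $G_2$. Then $G\in\mathcal{C}_k$ if and only if both $G_1\in\mathcal{C}_k$ and $G_2\in\mathcal{C}_k$.
   Context: A hypergraph is a pair $G=(V,E)$ of finite sets with $E\subseteq 2^V$ and $|e|\ge2$ for all $e\in E$. A coloring requires every edge to contain two vertices of different colors; $\chi$ is the chromatic number. $G$ is $(k+1)$-critical if $\chi(G)=k+1$ but $\chi(H)\le k$ for every proper subhypergraph $H$. A $(v,w)$-hyperpath is a sequence $(v_1,e_1,\dots,e_{q-1},v_q)$ of distinct vertices and distinct edges with $v_1=v,v_q=w$, $\{v_i,v_{i+1}\}\subseteq e_i$; $\lambda_G(v,w)$ is the maximum number of pairwise edge-disjoint $(v,w)$-hyperpaths and $\lambda(G)=\max_{v\ne w}\lambda_G(v,w)$. $\mathcal{C}_k$ is the class of $(k+1)$-critical hypergraphs $H$ with $\lambda(H)\le k$. Hajós join $(G_1,v_1,e_1)\Delta(G_2,v_2,e_2)$: for vertex-disjoint $G_1,G_2$, $e_i\in E(G_i)$, $v_i\in e_i$, delete $e_1,e_2$, identify $v_1,v_2$ into a new vertex $v^*$, and add a new edge $e^*$ equal to $(e_1\cup e_2)\setminus\{v_1,v_2\}$ or to $((e_1\cup e_2)\setminus\{v_1,v_2\})\cup\{v^*\}$. *)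

theory Defs
  imports Main
begin

type_synonym 'a hgraph = "'a set \<times> 'a set set"

definition hypergraph :: "'a hgraph \<Rightarrow> bool" where
  "hypergraph G \<longleftrightarrow> finite (fst G) \<and> (\<forall>e\<in>snd G. e \<subseteq> fst G \<and> 2 \<le> card e)"

definition colorable :: "'a hgraph \<Rightarrow> nat \<Rightarrow> bool" where
  "colorable G k \<longleftrightarrow> (\<exists>f :: 'a \<Rightarrow> nat. f ` fst G \<subseteq> {..<k} \<and>
      (\<forall>e\<in>snd G. \<exists>u\<in>e. \<exists>w\<in>e. f u \<noteq> f w))"

definition chi :: "'a hgraph \<Rightarrow> nat" where
  "chi G = (LEAST k. colorable G k)"

definition proper_subhypergraph :: "'a hgraph \<Rightarrow> 'a hgraph \<Rightarrow> bool" where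
  "proper_subhypergraph H G \<longleftrightarrow> hypergraph H \<and> fst H \<subseteq> fst G \<and> snd H \<subseteq> snd G \<and> H \<noteq> G"

definition critical :: "nat \<Rightarrow> 'a hgraph \<Rightarrow> bool" where
  "critical k G \<longleftrightarrow> chi G = k + 1 \<and> (\<forall>H. proper_subhypergraph H G \<longrightarrow> chi H \<le> k)"

definition hyperpath :: "'a hgraph \<Rightarrow> 'a \<Rightarrow> 'a \<Rightarrow> 'a list \<Rightarrow> 'a set list \<Rightarrow> bool" where
  "hyperpath G v w vs es \<longleftrightarrow> vs \<noteq> [] \<and> length es + 1 = length vs \<and>
     distinct vs \<and> distinct es \<and> set vs \<subseteq> fst G \<and> set es \<subseteq> snd G \<and>
     hd vs = v \<and> last vs = w \<and>
     (\<forall>i < length es. {vs ! i, vs ! (i+1)} \<subseteq> es ! i)"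

definition local_lambda :: "'a hgraph \<Rightarrow> 'a \<Rightarrow> 'a \<Rightarrow> nat" where
  "local_lambda G v w = Max {n. \<exists>P :: ('a list \<times> 'a set list) list. length P = n \<and>
      (\<forall>p\<in>set P. hyperpath G v w (fst p) (snd p)) \<and>
      (\<forall>i<n. \<forall>j<n. i \<noteq> j \<longrightarrow> set (snd (P ! i)) \<inter> set (snd (P ! j)) = {})}"

text \<open>lambda(G) = max over distinct v,w (0 if there are fewer than two vertices).\<close>
definition hlambda :: "'a hgraph \<Rightarrow> nat" where
  "hlambda G = Max (insert 0 {local_lambda G v w | v w. v \<in> fst G \<and> w \<in> fst G \<and> v \<noteq> w})"

definition class_C :: "nat \<Rightarrow> 'a hgraph set" where
  "class_C k = {H. hypergraph H \<and> critical k H \<and> hlambda H \<le> k}"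

text \<open>Hajos join: G1, G2 vertex-disjoint, e_i an edge of G_i, v_i in e_i;
  v1 and v2 are identified into a new vertex vs (not in the remaining vertex set);
  e1, e2 are deleted and the new edge estar added, which is either
  (e1 \<union> e2) - {v1,v2} or that set together with vs.\<close>
definition hajos_join ::
  "'a hgraph \<Rightarrow> 'a \<Rightarrow> 'a set \<Rightarrow> 'a hgraph \<Rightarrow> 'a \<Rightarrow> 'a set \<Rightarrow> 'a \<Rightarrow> 'a hgraph \<Rightarrow> bool" where
  "hajos_join G1 v1 e1 G2 v2 e2 vs G \<longleftrightarrow>
     fst G1 \<inter> fst G2 = {} \<and> e1 \<in> snd G1 \<and> v1 \<in> e1 \<and> e2 \<in> snd G2 \<and> v2 \<in> e2 \<and>
     vs \<notin> (fst G1 - {v1}) \<union> (fst G2 - {v2}) \<and>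
     (let r = (\<lambda>x. if x = v1 \<or> x = v2 then vs else x);
          e0 = (e1 \<union> e2) - {v1, v2}
      in fst G = (fst G1 - {v1}) \<union> (fst G2 - {v2}) \<union> {vs} \<and>
         (snd G = (image r ` (snd G1 - {e1})) \<union> (image r ` (snd G2 - {e2})) \<union> {e0} \<or>
          snd G = (image r ` (snd G1 - {e1})) \<union> (image r ` (snd G2 - {e2})) \<union> {insert vs e0}))"

end

theory Submission
  imports Defs "HOL-Combinatorics.Transposition"
begin

text \<open>Write z for the merged vertex and e* for the new edge. A k-colouring of G restricts to
  k-colourings of G1 - e1 and G2 - e2 that agree at v1 and v2; conversely two such colourings glue,
  after permuting colours, to a k-colouring of G - e*, which also colours e* unless all vertices
  of e* get the colour of z. If G_i is (k+1)-critical, every k-colouring of G_i - e_i is constant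
  on e_i; this transfers criticality in both directions, and k \<ge> 3 leaves a third colour with
  which the glued colouring can be made to separate e*. For the connectivity bound, a hyperpath of
  G1 through e1 is rerouted through e* and a path in G2 - e2 from v2 to another vertex of e2, which
  exists by criticality; a hyperpath of G is projected into G1 by collapsing the G2 side onto v1.
  Both maps keep edge-disjoint hyperpaths edge-disjoint.\<close>

definition bichromatic :: "('a \<Rightarrow> nat) \<Rightarrow> 'a set \<Rightarrow> bool" where
  "bichromatic f e \<longleftrightarrow> (\<exists>u\<in>e. \<exists>w\<in>e. f u \<noteq> f w)"

abbreviation delete_edge :: "'a hgraph \<Rightarrow> 'a set \<Rightarrow> 'a hgraph" where
  "delete_edge G e \<equiv> (fst G, snd G - {e})"

lemma colorable_iff_bichromatic:
  "colorable G k \<longleftrightarrow> (\<exists>f. f ` fst G \<subseteq> {..<k} \<and> (\<forall>e\<in>snd G. bichromatic f e))"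
  unfolding colorable_def bichromatic_def ..

lemma bichromatic_cong: "(\<And>x. x \<in> e \<Longrightarrow> f x = g x) \<Longrightarrow> bichromatic f e \<longleftrightarrow> bichromatic g e"
  unfolding bichromatic_def by auto

lemma bichromatic_image: "bichromatic f (h ` e) \<longleftrightarrow> bichromatic (f \<circ> h) e"
  unfolding bichromatic_def by auto

lemma bichromatic_comp_inj: "inj \<sigma> \<Longrightarrow> bichromatic (\<sigma> \<circ> f) e \<longleftrightarrow> bichromatic f e"
  unfolding bichromatic_def by (simp add: inj_eq)

lemma bichromatic_avoids: "bichromatic f e \<Longrightarrow> \<exists>a\<in>e. f a \<noteq> c"
  unfolding bichromatic_def by metis

lemma not_bichromatic: "\<not> bichromatic f e \<Longrightarrow> v \<in> e \<Longrightarrow> x \<in> e \<Longrightarrow> f x = f v"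
  unfolding bichromatic_def by blast

lemma deleted_edge_monochromatic:
  assumes "\<not> colorable G k" "f ` fst G \<subseteq> {..<k}" "\<forall>d\<in>snd G - {e}. bichromatic f d"
  shows "\<not> bichromatic f e"
  using assms unfolding colorable_iff_bichromatic by blast

lemma hypergraph_edge_subset: "hypergraph G \<Longrightarrow> e \<in> snd G \<Longrightarrow> e \<subseteq> fst G"
  unfolding hypergraph_def by blast

lemma hypergraph_finite_edges: "hypergraph G \<Longrightarrow> finite (snd G)"
proof -
  assume "hypergraph G"
  then have "snd G \<subseteq> Pow (fst G)" "finite (fst G)"
    unfolding hypergraph_def by auto
  then show ?thesis
    by (simp add: finite_subset)
qed

lemma hypergraph_edge_other_vertex:
  assumes "hypergraph G" "e \<in> snd G"
  obtains b where "b \<in> e" "b \<noteq> a"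
proof -
  have "\<not> e \<subseteq> {a}"
    using assms card_mono[of "{a}" e] unfolding hypergraph_def by fastforce
  then show thesis using that by blast
qed

lemma colorable_subhypergraph:
  assumes "colorable G k" "fst H \<subseteq> fst G" "snd H \<subseteq> snd G"
  shows "colorable H k"
proof -
  obtain f where "f ` fst G \<subseteq> {..<k}" "\<forall>e\<in>snd G. bichromatic f e"
    using assms(1) unfolding colorable_iff_bichromatic by blast
  then show ?thesis
    using assms(2,3) unfolding colorable_iff_bichromatic by blast
qed

lemma colorable_mono:
  assumes "colorable G k" "k \<le> k'"
  shows "colorable G k'"
proof -
  obtain f where "f ` fst G \<subseteq> {..<k}" "\<forall>e\<in>snd G. bichromatic f e"
    using assms(1) unfolding colorable_iff_bichromatic by blast
  moreover have "{..<k} \<subseteq> {..<k'}"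
    using assms(2) by auto
  ultimately show ?thesis
    unfolding colorable_iff_bichromatic by (meson order_trans)
qed

lemma colorable_card: "hypergraph G \<Longrightarrow> colorable G (card (fst G))"
proof -
  assume G: "hypergraph G"
  have "finite (fst G)"
    using G unfolding hypergraph_def by blast
  then obtain f :: "'a \<Rightarrow> nat" and n where f: "f ` fst G = {i. i < n}" "inj_on f (fst G)"
    using finite_imp_inj_to_nat_seg by blast
  have "n = card (fst G)"
    using card_image[OF f(2)] f(1) by simp
  have "bichromatic f e" if e: "e \<in> snd G" for e
  proof -
    have "e \<noteq> {}"
      using G e unfolding hypergraph_def by (metis card.empty not_numeral_le_zero)
    then obtain u where "u \<in> e"
      by blast
    moreover obtain w where "w \<in> e" "w \<noteq> u"
      using hypergraph_edge_other_vertex[OF G e] .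
    moreover have "u \<in> fst G" "w \<in> fst G"
      using \<open>u \<in> e\<close> \<open>w \<in> e\<close> hypergraph_edge_subset[OF G e] by blast+
    ultimately have "f u \<noteq> f w"
      using inj_on_contraD[OF f(2)] by metis
    then show ?thesis
      using \<open>u \<in> e\<close> \<open>w \<in> e\<close> unfolding bichromatic_def by blast
  qed
  moreover have "f ` fst G \<subseteq> {..<card (fst G)}"
    using f(1) \<open>n = card (fst G)\<close> by (simp add: lessThan_def)
  ultimately show ?thesis
    unfolding colorable_iff_bichromatic by blast
qed

lemma chi_le_iff:
  assumes "hypergraph G"
  shows "chi G \<le> k \<longleftrightarrow> colorable G k"
proof
  assume "chi G \<le> k"
  moreover have "colorable G (chi G)"
    unfolding chi_def by (rule LeastI[of "colorable G", OF colorable_card[OF assms]])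
  ultimately show "colorable G k"
    using colorable_mono by blast
next
  assume "colorable G k"
  then show "chi G \<le> k"
    unfolding chi_def by (rule Least_le)
qed

lemma colorable_insert_edge:
  assumes G: "hypergraph G" and e: "e \<in> snd G" and del: "colorable (delete_edge G e) k"
  shows "colorable G (Suc k)"
proof -
  obtain f where f: "f ` fst G \<subseteq> {..<k}" "\<forall>d\<in>snd G - {e}. bichromatic f d"
    using del unfolding colorable_iff_bichromatic by auto
  obtain a where a: "a \<in> e"
    using G e unfolding hypergraph_def by fastforce
  define g where "g = f(a := k)"
  \<comment> \<open>the new colour k makes every edge through a bichromatic\<close>
  have "bichromatic g d" if d: "d \<in> snd G" for d
  proof (cases "a \<in> d")
    case True
    obtain b where "b \<in> d" "b \<noteq> a"
      using hypergraph_edge_other_vertex[OF G d] .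
    moreover have "f b < k"
      using f(1) \<open>b \<in> d\<close> hypergraph_edge_subset[OF G d] by auto
    ultimately have "g b \<noteq> g a"
      by (simp add: g_def)
    then show ?thesis
      using True \<open>b \<in> d\<close> unfolding bichromatic_def by blast
  next
    case False
    then have "bichromatic f d"
      using f(2) d a by blast
    moreover have "bichromatic g d \<longleftrightarrow> bichromatic f d"
      using False by (intro bichromatic_cong) (auto simp: g_def)
    ultimately show ?thesis
      by blast
  qed
  moreover have "g ` fst G \<subseteq> {..<Suc k}"
    using f(1) unfolding g_def by auto
  ultimately show ?thesis
    unfolding colorable_iff_bichromatic by blast
qed

lemma colorable_insert_isolated:
  assumes "colorable (fst G - {x}, snd G) k" "\<forall>e\<in>snd G. x \<notin> e" "0 < k"
  shows "colorable G k"
proof -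
  obtain f where f: "f ` (fst G - {x}) \<subseteq> {..<k}" "\<forall>e\<in>snd G. bichromatic f e"
    using assms(1) unfolding colorable_iff_bichromatic by auto
  have "bichromatic (f(x := 0)) e \<longleftrightarrow> bichromatic f e" if "e \<in> snd G" for e
    using assms(2) that by (intro bichromatic_cong) auto
  then have "bichromatic (f(x := 0)) e" if "e \<in> snd G" for e
    using f(2) that by blast
  moreover have "(f(x := 0)) ` fst G \<subseteq> {..<k}"
    using f(1) assms(3) by auto
  ultimately show ?thesis
    unfolding colorable_iff_bichromatic by blast
qed

lemma proper_subhypergraph_delete_edge:
  "hypergraph G \<Longrightarrow> e \<in> snd G \<Longrightarrow> proper_subhypergraph (delete_edge G e) G"
  unfolding proper_subhypergraph_def hypergraph_def by (auto simp: prod_eq_iff)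

lemma proper_subhypergraph_delete_vertex:
  "hypergraph G \<Longrightarrow> x \<in> fst G \<Longrightarrow> \<forall>e\<in>snd G. x \<notin> e \<Longrightarrow> proper_subhypergraph (fst G - {x}, snd G) G"
  unfolding proper_subhypergraph_def hypergraph_def by (auto simp: prod_eq_iff)

lemma proper_subhypergraph_cases:
  assumes "proper_subhypergraph H G"
  obtains e where "e \<in> snd G" "fst H \<subseteq> fst G" "snd H \<subseteq> snd G - {e}"
  | x where "x \<in> fst G" "\<forall>e\<in>snd G. x \<notin> e"
proof (cases "snd H = snd G")
  case True
  then have "fst H \<noteq> fst G"
    using assms unfolding proper_subhypergraph_def by (metis prod.collapse)
  then obtain x where "x \<in> fst G" "x \<notin> fst H"
    using assms unfolding proper_subhypergraph_def by blast
  moreover have "\<forall>e\<in>snd G. e \<subseteq> fst H"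
    using assms True unfolding proper_subhypergraph_def hypergraph_def by blast
  ultimately show thesis
    using that(2) by blast
next
  case False
  then show thesis
    using assms that(1) unfolding proper_subhypergraph_def by blast
qed

lemma criticalD:
  assumes G: "hypergraph G" and k: "1 \<le> k" and crit: "critical k G"
  shows "\<not> colorable G k" "\<forall>e\<in>snd G. colorable (delete_edge G e) k"
    "\<forall>x\<in>fst G. \<exists>e\<in>snd G. x \<in> e"
proof -
  have sub: "colorable H k" if "proper_subhypergraph H G" for H
    using crit that chi_le_iff unfolding critical_def proper_subhypergraph_def by blast
  show nc: "\<not> colorable G k"
    using crit chi_le_iff[OF G, of k] unfolding critical_def by simp
  show "\<forall>e\<in>snd G. colorable (delete_edge G e) k"
    using sub proper_subhypergraph_delete_edge[OF G] by blast
  show "\<forall>x\<in>fst G. \<exists>e\<in>snd G. x \<in> e"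
  proof (rule ccontr)
    assume "\<not> (\<forall>x\<in>fst G. \<exists>e\<in>snd G. x \<in> e)"
    then obtain x where x: "x \<in> fst G" "\<forall>e\<in>snd G. x \<notin> e"
      by blast
    then have "colorable G k"
      using colorable_insert_isolated[OF sub[OF proper_subhypergraph_delete_vertex[OF G x]] x(2)] k
      by simp
    with nc show False ..
  qed
qed

lemma criticalI:
  assumes G: "hypergraph G" and k: "1 \<le> k" and nc: "\<not> colorable G k"
    and del: "\<forall>e\<in>snd G. colorable (delete_edge G e) k" and cov: "\<forall>x\<in>fst G. \<exists>e\<in>snd G. x \<in> e"
  shows "critical k G"
proof -
  have "snd G \<noteq> {}"
  proof
    assume "snd G = {}"
    then have "colorable G k"
      using k unfolding colorable_iff_bichromatic by (intro exI[of _ "\<lambda>_. 0"]) auto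
    with nc show False ..
  qed
  then obtain e where "e \<in> snd G"
    by blast
  then have "colorable G (Suc k)"
    using del colorable_insert_edge[OF G] by blast
  then have "chi G = k + 1"
    using nc chi_le_iff[OF G] by (metis Suc_eq_plus1 le_antisym not_less_eq_eq)
  moreover have "chi H \<le> k" if "proper_subhypergraph H G" for H
    using that
  proof (cases rule: proper_subhypergraph_cases)
    case (1 e)
    then have "colorable H k"
      using del colorable_subhypergraph[of "delete_edge G e" k H] by simp
    then show ?thesis
      using that chi_le_iff unfolding proper_subhypergraph_def by blast
  next
    case (2 x)
    then show ?thesis using cov by blast
  qed
  ultimately show ?thesis
    unfolding critical_def by blast
qed

text \<open>The last condition is needed because an isolated vertex can be deleted without
  changing \<open>chi\<close>.\<close>

lemma critical_iff:
  assumes "hypergraph G" "1 \<le> k"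
  shows "critical k G \<longleftrightarrow> \<not> colorable G k \<and> (\<forall>e\<in>snd G. colorable (delete_edge G e) k) \<and>
    (\<forall>x\<in>fst G. \<exists>e\<in>snd G. x \<in> e)"
  using criticalD[OF assms] criticalI[OF assms] by blast

definition linked :: "'a set set \<Rightarrow> 'a \<Rightarrow> 'a \<Rightarrow> bool" where
  "linked F = (\<lambda>x y. \<exists>e\<in>F. x \<in> e \<and> y \<in> e)\<^sup>*\<^sup>*"

lemma linked_refl [simp]: "linked F x x"
  unfolding linked_def by simp

lemma linked_edge: "e \<in> F \<Longrightarrow> x \<in> e \<Longrightarrow> y \<in> e \<Longrightarrow> linked F x y"
  unfolding linked_def by (rule r_into_rtranclp) blast

lemma linked_trans: "linked F x y \<Longrightarrow> linked F y z \<Longrightarrow> linked F x z"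
  unfolding linked_def by (rule rtranclp_trans)

lemma linked_sym: "linked F x y \<Longrightarrow> linked F y x"
  unfolding linked_def by (rule sympD[OF symp_rtranclp]) (auto intro: sympI)

lemma linked_map:
  assumes "linked F x y"
    and "\<And>d a b. d \<in> F \<Longrightarrow> a \<in> d \<Longrightarrow> b \<in> d \<Longrightarrow> linked F' (\<pi> a) (\<pi> b)"
  shows "linked F' (\<pi> x) (\<pi> y)"
  using assms(1) unfolding linked_def
proof (induction rule: rtranclp_induct)
  case (step y y')
  then obtain d where "d \<in> F" "y \<in> d" "y' \<in> d"
    by blast
  then have "linked F' (\<pi> y) (\<pi> y')"
    by (rule assms(2))
  with step.IH show ?case
    unfolding linked_def by (rule rtranclp_trans)
qed simp

lemma linked_component_closed:
  assumes "d \<in> F" "y \<in> d" "linked F v y"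
  shows "d \<subseteq> {x. linked F v x}"
proof
  fix x assume x: "x \<in> d"
  have "linked F y x"
    by (rule linked_edge[OF assms(1,2) x])
  then show "x \<in> {x. linked F v x}"
    using linked_trans[OF assms(3)] by simp
qed

lemma linked_mono: "linked F x y \<Longrightarrow> F \<subseteq> F' \<Longrightarrow> linked F' x y"
  unfolding linked_def by (erule rtranclp_mono[THEN predicate2D, rotated]) blast

lemma hyperpath_take:
  assumes p: "hyperpath G u w vs es" and j: "j < length vs"
  shows "hyperpath G u (vs ! j) (take (Suc j) vs) (take j es)"
proof -
  have len: "length es + 1 = length vs"
    and step: "\<forall>i < length es. {vs ! i, vs ! (i + 1)} \<subseteq> es ! i"
    using p unfolding hyperpath_def by blast+
  have "\<forall>i < length (take j es). {take (Suc j) vs ! i, take (Suc j) vs ! (i + 1)} \<subseteq> take j es ! i"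
    using step j len by auto
  moreover have "set (take (Suc j) vs) \<subseteq> fst G" "set (take j es) \<subseteq> snd G"
    using p unfolding hyperpath_def by (meson order_trans set_take_subset)+
  moreover have "last (take (Suc j) vs) = vs ! j"
    using j by (simp add: take_Suc_conv_app_nth)
  ultimately show ?thesis
    using p j len unfolding hyperpath_def by (simp add: hd_take)
qed

lemma hyperpath_snoc:
  assumes p: "hyperpath G u y vs es" and e: "e \<in> snd G" "y \<in> e" "y' \<in> e" "y' \<in> fst G"
    and new: "y' \<notin> set vs" "e \<notin> set es"
  shows "hyperpath G u y' (vs @ [y']) (es @ [e])"
proof -
  have len: "length es + 1 = length vs"
    and step: "\<forall>i < length es. {vs ! i, vs ! (i + 1)} \<subseteq> es ! i"
    using p unfolding hyperpath_def by blast+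
  have "vs ! length es = y"
    using p unfolding hyperpath_def by (metis add_diff_cancel_right' last_conv_nth)
  then have "{(vs @ [y']) ! i, (vs @ [y']) ! (i + 1)} \<subseteq> (es @ [e]) ! i"
    if "i < length (es @ [e])" for i
  proof (cases "i < length es")
    case True
    then show ?thesis
      using step len by (simp add: nth_append)
  next
    case False
    then have "i = length es"
      using that by simp
    then show ?thesis
      using len e \<open>vs ! length es = y\<close> by (simp add: nth_append)
  qed
  then show ?thesis
    using p e new unfolding hyperpath_def by auto
qed

lemma hyperpath_extend:
  assumes p: "hyperpath G u y vs es" and e: "e \<in> snd G" "y \<in> e" "y' \<in> e" "y' \<in> fst G"
  obtains vs' es' where "hyperpath G u y' vs' es'" "set es' \<subseteq> insert e (set es)"
proof -
  consider (visited) "y' \<in> set vs" | (reused) "y' \<notin> set vs" "e \<in> set es"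
    | (fresh) "y' \<notin> set vs" "e \<notin> set es"
    by blast
  then show thesis
  proof cases
    case visited
    then obtain j where "j < length vs" "vs ! j = y'"
      by (meson in_set_conv_nth)
    moreover have "set (take j es) \<subseteq> insert e (set es)"
      by (auto dest: in_set_takeD)
    ultimately show thesis
      using that hyperpath_take[OF p] by blast
  next
    case reused
    \<comment> \<open>cut the path where it first uses e, then step through e to y'\<close>
    then obtain i where i: "i < length es" "es ! i = e"
      by (meson in_set_conv_nth)
    have len: "length es + 1 = length vs" and des: "distinct es"
      and step: "{vs ! i, vs ! (i + 1)} \<subseteq> es ! i"
      using p i unfolding hyperpath_def by blast+
    have prefix: "hyperpath G u (vs ! i) (take (Suc i) vs) (take i es)"
      using hyperpath_take[OF p] i len by simp
    have "e \<notin> set (take i es)"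
    proof
      assume "e \<in> set (take i es)"
      then obtain l where "l < i" "es ! l = e"
        by (auto simp: in_set_conv_nth)
      then show False
        using des i nth_eq_iff_index_eq by fastforce
    qed
    then have "hyperpath G u y' (take (Suc i) vs @ [y']) (take i es @ [e])"
      using hyperpath_snoc[OF prefix e(1) _ e(3,4)] step i reused(1)
      by (auto dest: in_set_takeD)
    moreover have "set (take i es @ [e]) \<subseteq> insert e (set es)"
      by (auto dest: in_set_takeD)
    ultimately show thesis
      using that by blast
  next
    case fresh
    then show thesis
      using that hyperpath_snoc[OF p e] by auto
  qed
qed

lemma hyperpath_of_linked:
  assumes G: "hypergraph G" and F: "F \<subseteq> snd G" and u: "u \<in> fst G" and "linked F u w"
  obtains vs es where "hyperpath G u w vs es" "set es \<subseteq> F"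
proof -
  have "\<exists>vs es. hyperpath G u w vs es \<and> set es \<subseteq> F"
    using \<open>linked F u w\<close> unfolding linked_def
  proof (induction rule: rtranclp_induct)
    case base
    have "hyperpath G u u [u] []"
      using u unfolding hyperpath_def by simp
    then show ?case
      by (intro exI[of _ "[u]"] exI[of _ "[]"]) simp
  next
    case (step y y')
    then obtain vs es e where p: "hyperpath G u y vs es" "set es \<subseteq> F"
      and e: "e \<in> F" "y \<in> e" "y' \<in> e"
      by blast
    moreover have "e \<in> snd G" "y' \<in> fst G"
      using G F e hypergraph_edge_subset by blast+
    ultimately obtain vs' es' where "hyperpath G u y' vs' es'" "set es' \<subseteq> insert e (set es)"
      by (metis hyperpath_extend)
    then show ?case
      using p(2) e(1) by blast
  qed
  then show thesis
    using that by blast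
qed

lemma linked_of_hyperpath:
  assumes "hyperpath G u w vs es"
  shows "linked (set es) u w"
proof -
  have "linked (set es) u (vs ! i)" if "i < length vs" for i
    using that
  proof (induction i)
    case 0
    then show ?case
      using assms unfolding hyperpath_def by (metis hd_conv_nth linked_refl)
  next
    case (Suc i)
    then have "i < length es" "{vs ! i, vs ! Suc i} \<subseteq> es ! i"
      using assms unfolding hyperpath_def by auto
    then have "linked (set es) (vs ! i) (vs ! Suc i)"
      using linked_edge[of "es ! i"] by simp
    then show ?case
      using Suc linked_trans by simp
  qed
  moreover have "w = vs ! (length vs - 1)" "length vs - 1 < length vs"
    using assms unfolding hyperpath_def by (auto simp: last_conv_nth)
  ultimately show ?thesis
    by simp
qed

lemma critical_vertex_in_two_edges:
  assumes G: "hypergraph G" and nc: "\<not> colorable G k" and del: "colorable (delete_edge G e) k"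
    and e: "e \<in> snd G" "x \<in> e" and k: "2 \<le> k"
  obtains e' where "e' \<in> snd G" "e' \<noteq> e" "x \<in> e'"
proof -
  obtain g where g: "g ` fst G \<subseteq> {..<k}" "\<forall>d\<in>snd G - {e}. bichromatic g d"
    using del unfolding colorable_iff_bichromatic by auto
  have mono: "\<not> bichromatic g e"
    using deleted_edge_monochromatic[OF nc g] .
  \<comment> \<open>recolouring x repairs e, so some other edge through x must break\<close>
  define g' where "g' = g(x := if g x = 0 then 1 else 0)"
  obtain b where b: "b \<in> e" "b \<noteq> x"
    using hypergraph_edge_other_vertex[OF G e(1)] .
  have "g' b \<noteq> g' x"
    using not_bichromatic[OF mono e(2) b(1)] b(2) by (simp add: g'_def)
  then have "bichromatic g' e"
    using b(1) e(2) unfolding bichromatic_def by blast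
  moreover have "g' ` fst G \<subseteq> {..<k}"
    using g(1) k by (auto simp: g'_def)
  ultimately have "\<not> (\<forall>d\<in>snd G - {e}. bichromatic g' d)"
    using nc unfolding colorable_iff_bichromatic by blast
  then obtain d where d: "d \<in> snd G" "d \<noteq> e" "\<not> bichromatic g' d"
    by blast
  have "x \<in> d"
  proof (rule ccontr)
    assume "x \<notin> d"
    then have "bichromatic g' d \<longleftrightarrow> bichromatic g d"
      by (intro bichromatic_cong) (auto simp: g'_def)
    then show False
      using d g(2) by blast
  qed
  then show thesis
    using that d(1,2) by blast
qed

lemma bichromatic_rotate:
  fixes g :: "'a \<Rightarrow> nat"
  assumes "bichromatic g d" "g ` d \<subseteq> {..<k}" "d \<subseteq> C \<or> d \<inter> C = {}"
  shows "bichromatic (\<lambda>y. if y \<in> C then Suc (g y) mod k else g y) d"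
proof -
  obtain u w where uw: "u \<in> d" "w \<in> d" "g u \<noteq> g w"
    using assms(1) unfolding bichromatic_def by blast
  have "g u < k" "g w < k"
    using assms(2) uw by auto
  then have "Suc (g u) mod k \<noteq> Suc (g w) mod k"
    using uw(3) by (auto simp: mod_Suc)
  then show ?thesis
    using assms(3) uw unfolding bichromatic_def by (metis disjoint_iff subsetD)
qed

lemma critical_edge_linked:
  assumes G: "hypergraph G" and e: "e \<in> snd G" "v \<in> e" and nc: "\<not> colorable G k"
    and del: "colorable (delete_edge G e) k" and k: "2 \<le> k"
  obtains b where "b \<in> e" "b \<noteq> v" "linked (snd G - {e}) v b"
proof -
  have "\<exists>b\<in>e. b \<noteq> v \<and> linked (snd G - {e}) v b"
  proof (rule ccontr)
    assume none: "\<not> (\<exists>b\<in>e. b \<noteq> v \<and> linked (snd G - {e}) v b)"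
    obtain g where g: "g ` fst G \<subseteq> {..<k}" "\<forall>d\<in>snd G - {e}. bichromatic g d"
      using del unfolding colorable_iff_bichromatic by auto
    have mono: "\<not> bichromatic g e"
      using deleted_edge_monochromatic[OF nc g] .
    \<comment> \<open>rotating the colours on the component of v in G - e would make e bichromatic\<close>
    define C where "C = {y. linked (snd G - {e}) v y}"
    define g' where "g' = (\<lambda>y. if y \<in> C then Suc (g y) mod k else g y)"
    have rotated: "bichromatic g' d" if d: "d \<in> snd G - {e}" for d
    proof -
      have "d \<subseteq> C \<or> d \<inter> C = {}"
        using linked_component_closed[OF d] unfolding C_def by blast
      moreover have "g ` d \<subseteq> {..<k}"
        using g(1) hypergraph_edge_subset[OF G] d by blast
      moreover have "bichromatic g d"
        using g(2) d by blast
      ultimately show ?thesis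
        unfolding g'_def by (intro bichromatic_rotate)
    qed
    obtain b where b: "b \<in> e" "b \<noteq> v"
      using hypergraph_edge_other_vertex[OF G e(1)] .
    have "g v < k"
      using g(1) e hypergraph_edge_subset[OF G] by blast
    then have "Suc (g v) mod k \<noteq> g v"
      using k by (auto simp: mod_Suc)
    moreover have "v \<in> C" "b \<notin> C"
      using none b unfolding C_def by auto
    moreover have "g b = g v"
      using not_bichromatic[OF mono e(2) b(1)] .
    ultimately have "g' b \<noteq> g' v"
      unfolding g'_def by simp
    then have "bichromatic g' e"
      using b(1) e(2) unfolding bichromatic_def by blast
    moreover have "g' ` fst G \<subseteq> {..<k}"
      using g(1) k unfolding g'_def by auto
    ultimately have "colorable G k"
      using rotated unfolding colorable_iff_bichromatic by (intro exI[of _ g']) blast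
    with nc show False ..
  qed
  then show thesis
    using that by blast
qed

definition disjoint_path_counts :: "'a hgraph \<Rightarrow> 'a \<Rightarrow> 'a \<Rightarrow> nat set" where
  "disjoint_path_counts G v w = {n. \<exists>P :: ('a list \<times> 'a set list) list. length P = n \<and>
      (\<forall>p\<in>set P. hyperpath G v w (fst p) (snd p)) \<and>
      (\<forall>i<n. \<forall>j<n. i \<noteq> j \<longrightarrow> set (snd (P ! i)) \<inter> set (snd (P ! j)) = {})}"

lemma local_lambda_eq_Max: "local_lambda G v w = Max (disjoint_path_counts G v w)"
  unfolding local_lambda_def disjoint_path_counts_def ..

lemma zero_in_disjoint_path_counts: "0 \<in> disjoint_path_counts G v w"
  unfolding disjoint_path_counts_def by (intro CollectI exI[of _ "[]"]) simp

lemma hyperpath_edges_nonempty: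
  assumes "hyperpath G v w vs es" "v \<noteq> w"
  shows "es \<noteq> []"
proof
  assume "es = []"
  then have "length vs = Suc 0"
    using assms(1) unfolding hyperpath_def by simp
  then obtain x where "vs = [x]"
    by (cases vs) auto
  then show False
    using assms unfolding hyperpath_def by auto
qed

lemma disjoint_path_counts_le_card:
  assumes G: "hypergraph G" and "v \<noteq> w" and "n \<in> disjoint_path_counts G v w"
  shows "n \<le> card (snd G)"
proof -
  obtain P :: "('a list \<times> 'a set list) list" where P: "length P = n"
    "\<forall>p\<in>set P. hyperpath G v w (fst p) (snd p)"
    "\<forall>i<n. \<forall>j<n. i \<noteq> j \<longrightarrow> set (snd (P ! i)) \<inter> set (snd (P ! j)) = {}"
    using assms(3) unfolding disjoint_path_counts_def by blast
  \<comment> \<open>the first edges of the paths are pairwise distinct\<close>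
  define first where "first i = hd (snd (P ! i))" for i
  have path: "hyperpath G v w (fst (P ! i)) (snd (P ! i))" if "i < n" for i
    using P that by auto
  then have first: "first i \<in> set (snd (P ! i))" if "i < n" for i
    using hyperpath_edges_nonempty[OF path[OF that] \<open>v \<noteq> w\<close>] by (simp add: first_def)
  have "inj_on first {..<n}"
  proof (rule inj_onI)
    fix i j assume "i \<in> {..<n}" "j \<in> {..<n}" "first i = first j"
    then show "i = j"
      using first P(3) by (metis IntI empty_iff lessThan_iff)
  qed
  moreover have "first ` {..<n} \<subseteq> snd G"
    using first path unfolding hyperpath_def by blast
  ultimately have "card {..<n} \<le> card (snd G)"
    using card_inj_on_le hypergraph_finite_edges[OF G] by blast
  then show ?thesis
    by simp
qed

lemma finite_disjoint_path_counts:
  assumes "hypergraph G" "v \<noteq> w"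
  shows "finite (disjoint_path_counts G v w)"
proof -
  have "disjoint_path_counts G v w \<subseteq> {..card (snd G)}"
    using disjoint_path_counts_le_card[OF assms] by auto
  then show ?thesis
    by (rule finite_subset) simp
qed

lemma hyperpath_edge_map:
  assumes G': "hypergraph G'" "\<pi> u \<in> fst G'" and p: "hyperpath G u w vs es"
    and sub: "\<And>e. e \<in> snd G \<Longrightarrow> \<phi> e \<subseteq> snd G'"
    and link: "\<And>e x y. e \<in> snd G \<Longrightarrow> x \<in> e \<Longrightarrow> y \<in> e \<Longrightarrow> linked (\<phi> e) (\<pi> x) (\<pi> y)"
  obtains vs' es' where "hyperpath G' (\<pi> u) (\<pi> w) vs' es'" "set es' \<subseteq> \<Union> (\<phi> ` set es)"
proof -
  have es: "set es \<subseteq> snd G"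
    using p unfolding hyperpath_def by blast
  have "linked (\<Union> (\<phi> ` set es)) (\<pi> x) (\<pi> y)" if "d \<in> set es" "x \<in> d" "y \<in> d" for d x y
  proof (rule linked_mono)
    show "linked (\<phi> d) (\<pi> x) (\<pi> y)"
      using link that es by blast
  qed (use that in blast)
  then have "linked (\<Union> (\<phi> ` set es)) (\<pi> u) (\<pi> w)"
    by (rule linked_map[OF linked_of_hyperpath[OF p]])
  moreover have "\<Union> (\<phi> ` set es) \<subseteq> snd G'"
    using es sub by blast
  ultimately show thesis
    using hyperpath_of_linked[OF G'(1) _ G'(2)] that by blast
qed

lemma disjoint_Union_image:
  assumes "A \<subseteq> E" "B \<subseteq> E" "A \<inter> B = {}"
    and "\<And>e e'. e \<in> E \<Longrightarrow> e' \<in> E \<Longrightarrow> e \<noteq> e' \<Longrightarrow> \<phi> e \<inter> \<phi> e' = {}"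
  shows "\<Union> (\<phi> ` A) \<inter> \<Union> (\<phi> ` B) = {}"
proof -
  have "\<phi> a \<inter> \<phi> b = {}" if "a \<in> A" "b \<in> B" for a b
  proof -
    have "a \<noteq> b"
      using assms(3) that by blast
    then show ?thesis
      using assms(1,2,4) that by blast
  qed
  then show ?thesis
    by blast
qed

lemma disjoint_path_counts_mono_edge_map:
  fixes G G' :: "'a hgraph"
  assumes G': "hypergraph G'" and u: "\<pi> u \<in> fst G'"
    and sub: "\<And>e. e \<in> snd G \<Longrightarrow> \<phi> e \<subseteq> snd G'"
    and disj: "\<And>e e'. e \<in> snd G \<Longrightarrow> e' \<in> snd G \<Longrightarrow> e \<noteq> e' \<Longrightarrow> \<phi> e \<inter> \<phi> e' = {}"
    and link: "\<And>e x y. e \<in> snd G \<Longrightarrow> x \<in> e \<Longrightarrow> y \<in> e \<Longrightarrow> linked (\<phi> e) (\<pi> x) (\<pi> y)"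
  shows "disjoint_path_counts G u w \<subseteq> disjoint_path_counts G' (\<pi> u) (\<pi> w)"
proof
  fix n assume "n \<in> disjoint_path_counts G u w"
  then obtain P :: "('a list \<times> 'a set list) list" where P: "length P = n"
    "\<forall>p\<in>set P. hyperpath G u w (fst p) (snd p)"
    "\<forall>i<n. \<forall>j<n. i \<noteq> j \<longrightarrow> set (snd (P ! i)) \<inter> set (snd (P ! j)) = {}"
    unfolding disjoint_path_counts_def by blast
  define image_path where "image_path p = (SOME q. hyperpath G' (\<pi> u) (\<pi> w) (fst q) (snd q) \<and>
    set (snd q) \<subseteq> \<Union> (\<phi> ` set (snd p)))" for p :: "'a list \<times> 'a set list"
  have image_path: "hyperpath G' (\<pi> u) (\<pi> w) (fst (image_path p)) (snd (image_path p)) \<and>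
    set (snd (image_path p)) \<subseteq> \<Union> (\<phi> ` set (snd p))" if p: "p \<in> set P" for p
  proof -
    obtain vs' es' where "hyperpath G' (\<pi> u) (\<pi> w) vs' es'" "set es' \<subseteq> \<Union> (\<phi> ` set (snd p))"
      by (rule hyperpath_edge_map[where \<pi> = \<pi> and \<phi> = \<phi>, OF G' u P(2)[rule_format, OF p] sub link])
    then have "\<exists>q. hyperpath G' (\<pi> u) (\<pi> w) (fst q) (snd q) \<and> set (snd q) \<subseteq> \<Union> (\<phi> ` set (snd p))"
      by (intro exI[of _ "(vs', es')"]) simp
    then show ?thesis
      unfolding image_path_def by (rule someI_ex)
  qed
  have "set (snd (image_path (P ! i))) \<inter> set (snd (image_path (P ! j))) = {}"
    if ij: "i < n" "j < n" "i \<noteq> j" for i j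
  proof -
    have i: "P ! i \<in> set P" and j: "P ! j \<in> set P"
      using P(1) ij by simp_all
    have sub_i: "set (snd (P ! i)) \<subseteq> snd G" and sub_j: "set (snd (P ! j)) \<subseteq> snd G"
      using P(2) i j unfolding hyperpath_def by simp_all
    have img_i: "set (snd (image_path (P ! i))) \<subseteq> \<Union> (\<phi> ` set (snd (P ! i)))"
      and img_j: "set (snd (image_path (P ! j))) \<subseteq> \<Union> (\<phi> ` set (snd (P ! j)))"
      using image_path[OF i] image_path[OF j] by simp_all
    have "set (snd (P ! i)) \<inter> set (snd (P ! j)) = {}"
      using P(3) ij by blast
    then have "\<Union> (\<phi> ` set (snd (P ! i))) \<inter> \<Union> (\<phi> ` set (snd (P ! j))) = {}"
      by (rule disjoint_Union_image[OF sub_i sub_j _ disj])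
    then show ?thesis
      using img_i img_j by blast
  qed
  then show "n \<in> disjoint_path_counts G' (\<pi> u) (\<pi> w)"
    unfolding disjoint_path_counts_def using image_path P(1)
    by (intro CollectI exI[of _ "map image_path P"]) auto
qed

lemma local_lambda_mono_edge_map:
  fixes G G' :: "'a hgraph"
  assumes G': "hypergraph G'" and neq: "\<pi> u \<noteq> \<pi> w" and u: "\<pi> u \<in> fst G'"
    and sub: "\<And>e. e \<in> snd G \<Longrightarrow> \<phi> e \<subseteq> snd G'"
    and disj: "\<And>e e'. e \<in> snd G \<Longrightarrow> e' \<in> snd G \<Longrightarrow> e \<noteq> e' \<Longrightarrow> \<phi> e \<inter> \<phi> e' = {}"
    and link: "\<And>e x y. e \<in> snd G \<Longrightarrow> x \<in> e \<Longrightarrow> y \<in> e \<Longrightarrow> linked (\<phi> e) (\<pi> x) (\<pi> y)"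
  shows "local_lambda G u w \<le> local_lambda G' (\<pi> u) (\<pi> w)"
proof -
  have "disjoint_path_counts G u w \<subseteq> disjoint_path_counts G' (\<pi> u) (\<pi> w)"
    by (rule disjoint_path_counts_mono_edge_map[where \<pi> = \<pi> and \<phi> = \<phi>, OF G' u sub disj link])
  then show ?thesis
    unfolding local_lambda_eq_Max
    by (rule Max_mono)
      (use zero_in_disjoint_path_counts[of G u w] finite_disjoint_path_counts[OF G' neq] in auto)
qed

lemma hlambda_le_iff:
  assumes "hypergraph G"
  shows "hlambda G \<le> k \<longleftrightarrow> (\<forall>u\<in>fst G. \<forall>w\<in>fst G. u \<noteq> w \<longrightarrow> local_lambda G u w \<le> k)"
proof -
  have "{local_lambda G v w | v w. v \<in> fst G \<and> w \<in> fst G \<and> v \<noteq> w}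
      \<subseteq> (\<lambda>(v, w). local_lambda G v w) ` (fst G \<times> fst G)"
    by auto
  moreover have "finite (fst G)"
    using assms unfolding hypergraph_def by blast
  ultimately have "finite {local_lambda G v w | v w. v \<in> fst G \<and> w \<in> fst G \<and> v \<noteq> w}"
    by (meson finite_SigmaI finite_imageI finite_subset)
  then have "hlambda G \<le> k \<longleftrightarrow>
      (\<forall>a\<in>{local_lambda G v w | v w. v \<in> fst G \<and> w \<in> fst G \<and> v \<noteq> w}. a \<le> k)"
    unfolding hlambda_def by simp
  then show ?thesis
    by blast
qed

lemma transpose_less: "p < k \<Longrightarrow> c < k \<Longrightarrow> x < k \<Longrightarrow> transpose p c x < (k::nat)"
  by (simp add: transpose_def)

lemma colour_permutation:
  fixes p a c d k :: nat
  assumes "p < k" "a < k" "c < k" "d < k" "p \<noteq> a" "c \<noteq> d"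
  obtains \<sigma> where "inj \<sigma>" "\<forall>x<k. \<sigma> x < k" "\<sigma> p = c" "\<sigma> a = d"
proof
  define \<tau> where "\<tau> = transpose p c"
  have "\<tau> a \<noteq> c"
    using assms(5) unfolding \<tau>_def by (metis transpose_apply_first transpose_eq_imp_eq)
  then show "(transpose (\<tau> a) d \<circ> \<tau>) p = c" "(transpose (\<tau> a) d \<circ> \<tau>) a = d"
    using assms(6) unfolding \<tau>_def by auto
  show "inj (transpose (\<tau> a) d \<circ> \<tau>)"
    unfolding \<tau>_def by (simp add: inj_compose inj_transpose)
  show "\<forall>x<k. (transpose (\<tau> a) d \<circ> \<tau>) x < k"
    using assms(1-4) unfolding \<tau>_def by (simp add: transpose_less)
qed

locale hajos =
  fixes G1 G2 G :: "'a hgraph" and v1 v2 z :: 'a and e1 e2 :: "'a set"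
  assumes join: "hajos_join G1 v1 e1 G2 v2 e2 z G"
    and hypergraph1: "hypergraph G1" and hypergraph2: "hypergraph G2"
begin

definition merge :: "'a \<Rightarrow> 'a" where
  "merge x = (if x = v1 \<or> x = v2 then z else x)"

definition edges1 :: "'a set set" where
  "edges1 = image merge ` (snd G1 - {e1})"

definition edges2 :: "'a set set" where
  "edges2 = image merge ` (snd G2 - {e2})"

definition e_star :: "'a set" where
  "e_star = (if snd G = edges1 \<union> edges2 \<union> {(e1 \<union> e2) - {v1, v2}} then (e1 \<union> e2) - {v1, v2}
    else insert z ((e1 \<union> e2) - {v1, v2}))"

definition collapse :: "'a \<Rightarrow> 'a" where
  "collapse y = (if y \<in> fst G1 - {v1} then y else v1)"

lemma merge_eq: "(\<lambda>x. if x = v1 \<or> x = v2 then z else x) = merge"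
  by (simp add: merge_def fun_eq_iff)

lemma vertices_disjoint: "fst G1 \<inter> fst G2 = {}"
  and e1_edge: "e1 \<in> snd G1" and v1_in_e1: "v1 \<in> e1"
  and e2_edge: "e2 \<in> snd G2" and v2_in_e2: "v2 \<in> e2"
  and z_notin1: "z \<notin> fst G1 - {v1}" and z_notin2: "z \<notin> fst G2 - {v2}"
  and vertices_G: "fst G = (fst G1 - {v1}) \<union> (fst G2 - {v2}) \<union> {z}"
  using join unfolding hajos_join_def Let_def by auto

lemma edges_G: "snd G = edges1 \<union> edges2 \<union> {e_star}"
proof -
  have "snd G = edges1 \<union> edges2 \<union> {(e1 \<union> e2) - {v1, v2}} \<or>
      snd G = edges1 \<union> edges2 \<union> {insert z ((e1 \<union> e2) - {v1, v2})}"
    using join unfolding hajos_join_def Let_def merge_eq edges1_def[symmetric] edges2_def[symmetric]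
    by (elim conjE) assumption
  then show ?thesis
    unfolding e_star_def by (elim disjE) (simp_all split: if_split)
qed

lemma edge_subset1: "e \<in> snd G1 \<Longrightarrow> e \<subseteq> fst G1"
  using hypergraph1 by (rule hypergraph_edge_subset)

lemma edge_subset2: "e \<in> snd G2 \<Longrightarrow> e \<subseteq> fst G2"
  using hypergraph2 by (rule hypergraph_edge_subset)

lemma v1_vertex: "v1 \<in> fst G1" and v2_vertex: "v2 \<in> fst G2"
  using edge_subset1[OF e1_edge] v1_in_e1 edge_subset2[OF e2_edge] v2_in_e2 by blast+

lemma merge_vertex1: "x \<in> fst G1 \<Longrightarrow> merge x = (if x = v1 then z else x)"
  unfolding merge_def using v2_vertex vertices_disjoint by auto

lemma merge_vertex2: "x \<in> fst G2 \<Longrightarrow> merge x = (if x = v2 then z else x)"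
  unfolding merge_def using v1_vertex vertices_disjoint by auto

lemma merge_v1 [simp]: "merge v1 = z" and merge_v2 [simp]: "merge v2 = z"
  by (simp_all add: merge_def)

lemma merge_fixed1: "x \<in> fst G1 \<Longrightarrow> x \<noteq> v1 \<Longrightarrow> merge x = x"
  by (simp add: merge_vertex1)

lemma merge_fixed2: "x \<in> fst G2 \<Longrightarrow> x \<noteq> v2 \<Longrightarrow> merge x = x"
  by (simp add: merge_vertex2)

lemma collapse_merge: "x \<in> fst G1 \<Longrightarrow> collapse (merge x) = x"
  unfolding collapse_def using merge_vertex1 z_notin1 by auto

lemma merge_image_inj1: "e \<subseteq> fst G1 \<Longrightarrow> e' \<subseteq> fst G1 \<Longrightarrow> merge ` e = merge ` e' \<Longrightarrow> e = e'"
  using inj_on_image_eq_iff[OF inj_on_inverseI[of "fst G1" collapse merge]] collapse_merge by blast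

lemma merge_in_G1: "x \<in> fst G1 \<Longrightarrow> merge x \<in> fst G"
  unfolding vertices_G using merge_vertex1 by auto

lemma merge_in_G2: "x \<in> fst G2 \<Longrightarrow> merge x \<in> fst G"
  unfolding vertices_G using merge_vertex2 by auto

lemma merge_range1: "f ` fst G \<subseteq> {..<k} \<Longrightarrow> (f \<circ> merge) ` fst G1 \<subseteq> {..<k}"
  using merge_in_G1 by auto

lemma merge_range2: "f ` fst G \<subseteq> {..<k} \<Longrightarrow> (f \<circ> merge) ` fst G2 \<subseteq> {..<k}"
  using merge_in_G2 by auto

lemma edges1_subset: "d \<in> edges1 \<Longrightarrow> d \<subseteq> insert z (fst G1 - {v1})"
proof
  fix y assume "d \<in> edges1" "y \<in> d"
  then obtain e x where "e \<in> snd G1" "x \<in> e" "y = merge x"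
    unfolding edges1_def by blast
  moreover have "x \<in> fst G1"
    using calculation edge_subset1 by blast
  ultimately show "y \<in> insert z (fst G1 - {v1})"
    using merge_vertex1 by simp
qed

lemma edges2_subset: "d \<in> edges2 \<Longrightarrow> d \<subseteq> insert z (fst G2 - {v2})"
proof
  fix y assume "d \<in> edges2" "y \<in> d"
  then obtain e x where "e \<in> snd G2" "x \<in> e" "y = merge x"
    unfolding edges2_def by blast
  moreover have "x \<in> fst G2"
    using calculation edge_subset2 by blast
  ultimately show "y \<in> insert z (fst G2 - {v2})"
    using merge_vertex2 by simp
qed

lemma e_star_bounds:
  "e1 - {v1} \<subseteq> e_star" "e2 - {v2} \<subseteq> e_star" "e_star \<subseteq> insert z ((e1 - {v1}) \<union> (e2 - {v2}))"
  using edge_subset1[OF e1_edge] edge_subset2[OF e2_edge] v1_vertex v2_vertex vertices_disjoint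
  unfolding e_star_def by auto

lemma e_star_notin_edges1: "e_star \<notin> edges1"
proof
  assume "e_star \<in> edges1"
  obtain b where "b \<in> e2" "b \<noteq> v2"
    using hypergraph_edge_other_vertex[OF hypergraph2 e2_edge] .
  moreover have "b \<in> fst G2"
    using \<open>b \<in> e2\<close> edge_subset2[OF e2_edge] by blast
  ultimately show False
    using edges1_subset[OF \<open>e_star \<in> edges1\<close>] e_star_bounds(2) z_notin2 vertices_disjoint by blast
qed

lemma edges1_hyperedges: "d \<in> edges1 \<Longrightarrow> d \<subseteq> fst G \<and> 2 \<le> card d"
proof -
  assume "d \<in> edges1"
  then obtain e where e: "e \<in> snd G1" "d = merge ` e"
    unfolding edges1_def by blast
  have "inj_on merge e"
    using inj_on_inverseI[of e collapse merge] collapse_merge edge_subset1[OF e(1)] by blast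
  then have "card d = card e"
    using e(2) by (simp add: card_image)
  then show ?thesis
    using hypergraph1 e merge_in_G1 edge_subset1 unfolding hypergraph_def by auto
qed

end

text \<open>The join is symmetric: every lemma below about the G1 side also holds for the G2 side,
  under the prefix \<open>swapped\<close>.\<close>

sublocale hajos \<subseteq> swapped: hajos G2 G1 G v2 v1 z e2 e1
proof
  have merge_swap: "(\<lambda>x. if x = v2 \<or> x = v1 then z else x) = merge"
    by (auto simp: merge_def)
  have e_swap: "(e2 \<union> e1) - {v2, v1} = (e1 \<union> e2) - {v1, v2}"
    by blast
  show "hajos_join G2 v2 e2 G1 v1 e1 z G"
    unfolding hajos_join_def Let_def merge_swap e_swap edges1_def[symmetric] edges2_def[symmetric]
    using join unfolding hajos_join_def Let_def merge_eq edges1_def[symmetric] edges2_def[symmetric]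
    by (simp add: Un_ac Int_commute)
qed (fact hypergraph2 hypergraph1)+

context hajos
begin

lemma swapped_merge: "swapped.merge = merge"
  unfolding swapped.merge_def merge_def by (auto simp: fun_eq_iff)

lemma swapped_edges: "swapped.edges1 = edges2" "swapped.edges2 = edges1"
  unfolding swapped.edges1_def swapped.edges2_def edges1_def edges2_def swapped_merge by (rule refl)+

lemma swapped_e_star: "swapped.e_star = e_star"
  unfolding swapped.e_star_def e_star_def swapped_edges by (simp add: Un_ac insert_commute)

lemma e_star_notin_edges2: "e_star \<notin> edges2"
  using swapped.e_star_notin_edges1 unfolding swapped_edges swapped_e_star .

lemma edges_disjoint: "edges1 \<inter> edges2 = {}"
proof (rule ccontr)
  assume "edges1 \<inter> edges2 \<noteq> {}"
  then obtain e where e: "e \<in> snd G1" "merge ` e \<in> edges2"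
    unfolding edges1_def by blast
  obtain a where "a \<in> e" "a \<noteq> v1"
    using hypergraph_edge_other_vertex[OF hypergraph1 e(1)] .
  moreover have "a \<in> fst G1"
    using \<open>a \<in> e\<close> edge_subset1[OF e(1)] by blast
  ultimately have "a \<in> insert z (fst G2 - {v2})"
    using edges2_subset[OF e(2)] merge_fixed1 by (metis image_eqI subsetD)
  then show False
    using \<open>a \<in> fst G1\<close> \<open>a \<noteq> v1\<close> z_notin1 vertices_disjoint by blast
qed

lemma e_star_hyperedge: "e_star \<subseteq> fst G \<and> 2 \<le> card e_star"
proof -
  obtain a where "a \<in> e1" "a \<noteq> v1"
    using hypergraph_edge_other_vertex[OF hypergraph1 e1_edge] .
  moreover obtain b where "b \<in> e2" "b \<noteq> v2"
    using hypergraph_edge_other_vertex[OF hypergraph2 e2_edge] .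
  moreover have "a \<noteq> b"
    using \<open>a \<in> e1\<close> \<open>b \<in> e2\<close> edge_subset1[OF e1_edge] edge_subset2[OF e2_edge] vertices_disjoint
    by blast
  moreover have sub: "e_star \<subseteq> fst G"
    using e_star_bounds(3) edge_subset1[OF e1_edge] edge_subset2[OF e2_edge] unfolding vertices_G
    by blast
  moreover have "finite (fst G)"
    using hypergraph1 hypergraph2 unfolding vertices_G hypergraph_def by simp
  ultimately have "card {a, b} \<le> card e_star"
    using e_star_bounds(1,2) by (intro card_mono) (auto intro: finite_subset)
  then show ?thesis
    using sub \<open>a \<noteq> b\<close> by simp
qed

lemma hypergraph_G: "hypergraph G"
proof -
  have "d \<subseteq> fst G \<and> 2 \<le> card d" if "d \<in> snd G" for d
  proof -
    from that consider "d \<in> edges1" | "d \<in> edges2" | "d = e_star"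
      unfolding edges_G by blast
    then show ?thesis
    proof cases
      case 1
      then show ?thesis
        by (rule edges1_hyperedges)
    next
      case 2
      then show ?thesis
        using swapped.edges1_hyperedges unfolding swapped_edges by blast
    next
      case 3
      then show ?thesis
        using e_star_hyperedge by simp
    qed
  qed
  moreover have "finite (fst G)"
    using hypergraph1 hypergraph2 unfolding vertices_G hypergraph_def by simp
  ultimately show ?thesis
    unfolding hypergraph_def by blast
qed

definition glue :: "('a \<Rightarrow> nat) \<Rightarrow> ('a \<Rightarrow> nat) \<Rightarrow> 'a \<Rightarrow> nat" where
  "glue g1 g2 y = (if y \<in> fst G1 - {v1} then g1 y else if y = z then g1 v1 else g2 y)"

lemma glue_merge1: "x \<in> fst G1 \<Longrightarrow> glue g1 g2 (merge x) = g1 x"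
  unfolding glue_def using merge_vertex1 z_notin1 by auto

lemma glue_merge2: "x \<in> fst G2 \<Longrightarrow> g1 v1 = g2 v2 \<Longrightarrow> glue g1 g2 (merge x) = g2 x"
  unfolding glue_def using merge_vertex2 z_notin1 z_notin2 vertices_disjoint by auto

lemma glue_range: "g1 ` fst G1 \<subseteq> {..<k} \<Longrightarrow> g2 ` fst G2 \<subseteq> {..<k} \<Longrightarrow> glue g1 g2 ` fst G \<subseteq> {..<k}"
  unfolding glue_def vertices_G using v1_vertex by auto

lemma glue_bichromatic_merged1:
  assumes "e \<in> snd G1" "bichromatic g1 e"
  shows "bichromatic (glue g1 g2) (merge ` e)"
proof -
  have "glue g1 g2 (merge x) = g1 x" if "x \<in> e" for x
    using glue_merge1 edge_subset1 assms(1) that by blast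
  then have "bichromatic (glue g1 g2 \<circ> merge) e \<longleftrightarrow> bichromatic g1 e"
    by (intro bichromatic_cong) simp
  then show ?thesis
    using assms(2) by (simp add: bichromatic_image)
qed

lemma glue_bichromatic_merged2:
  assumes "e \<in> snd G2" "bichromatic g2 e" "g1 v1 = g2 v2"
  shows "bichromatic (glue g1 g2) (merge ` e)"
proof -
  have "glue g1 g2 (merge x) = g2 x" if "x \<in> e" for x
    using glue_merge2 edge_subset2 assms(1,3) that by blast
  then have "bichromatic (glue g1 g2 \<circ> merge) e \<longleftrightarrow> bichromatic g2 e"
    by (intro bichromatic_cong) simp
  then show ?thesis
    using assms(2) by (simp add: bichromatic_image)
qed

lemma glue_bichromatic_e_star:
  assumes "a \<in> e1" "a \<noteq> v1" "b \<in> e2" "b \<noteq> v2" "g1 a \<noteq> g2 b"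
  shows "bichromatic (glue g1 g2) e_star"
proof -
  have "a \<in> fst G1" "b \<in> fst G2"
    using assms edge_subset1[OF e1_edge] edge_subset2[OF e2_edge] by blast+
  then have "glue g1 g2 a = g1 a" "glue g1 g2 b = g2 b"
    using assms(2,4) z_notin2 vertices_disjoint unfolding glue_def by auto
  moreover have "a \<in> e_star" "b \<in> e_star"
    using assms(1-4) e_star_bounds(1,2) by blast+
  ultimately show ?thesis
    using assms(5) unfolding bichromatic_def by metis
qed

lemma colorable_glue:
  assumes g1: "g1 ` fst G1 \<subseteq> {..<k}" and g2: "g2 ` fst G2 \<subseteq> {..<k}" and eq: "g1 v1 = g2 v2"
    and D: "D \<subseteq> snd G"
    and bi1: "\<And>e. e \<in> snd G1 - {e1} \<Longrightarrow> merge ` e \<in> D \<Longrightarrow> bichromatic g1 e"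
    and bi2: "\<And>e. e \<in> snd G2 - {e2} \<Longrightarrow> merge ` e \<in> D \<Longrightarrow> bichromatic g2 e"
    and bi_star: "e_star \<in> D \<Longrightarrow> bichromatic (glue g1 g2) e_star"
  shows "colorable (fst G, D) k"
proof -
  have "bichromatic (glue g1 g2) d" if d: "d \<in> D" for d
  proof -
    have "d \<in> edges1 \<or> d \<in> edges2 \<or> d = e_star"
      using d D unfolding edges_G by blast
    then consider (one) e where "e \<in> snd G1 - {e1}" "d = merge ` e"
      | (two) e where "e \<in> snd G2 - {e2}" "d = merge ` e" | (star) "d = e_star"
      unfolding edges1_def edges2_def by blast
    then show ?thesis
    proof cases
      case one
      then show ?thesis
        using glue_bichromatic_merged1 bi1 d by blast
    next
      case two
      then show ?thesis
        using glue_bichromatic_merged2 bi2 d eq by blast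
    next
      case star
      then show ?thesis
        using bi_star d by simp
    qed
  qed
  then show ?thesis
    using glue_range[OF g1 g2] unfolding colorable_iff_bichromatic
    by (intro exI[of _ "glue g1 g2"]) simp
qed

text \<open>With three colours the colours of g1 can be permuted to agree with g2 at v1 and to differ
  from g2 on e_star.\<close>

lemma colorable_G_of_colourings:
  assumes k: "3 \<le> k" and g1: "g1 ` fst G1 \<subseteq> {..<k}" "\<forall>e\<in>snd G1. bichromatic g1 e"
    and g2: "g2 ` fst G2 \<subseteq> {..<k}" "\<forall>e\<in>snd G2 - {e2}. bichromatic g2 e"
  shows "colorable G k"
proof -
  obtain a where a: "a \<in> e1" "g1 a \<noteq> g1 v1"
    using bichromatic_avoids g1(2) e1_edge by blast
  obtain b where b: "b \<in> e2" "b \<noteq> v2"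
    using hypergraph_edge_other_vertex[OF hypergraph2 e2_edge] .
  have "\<exists>c::nat. c < 3 \<and> c \<noteq> g2 v2 \<and> c \<noteq> g2 b"
    by presburger
  then obtain c :: nat where c: "c < 3" "c \<noteq> g2 v2" "c \<noteq> g2 b"
    by blast
  have "g1 v1 < k" "g1 a < k" "g2 v2 < k"
    using g1(1) g2(1) a(1) v1_vertex v2_vertex edge_subset1[OF e1_edge] by auto
  then obtain \<sigma> where \<sigma>: "inj \<sigma>" "\<forall>x<k. \<sigma> x < k" "\<sigma> (g1 v1) = g2 v2" "\<sigma> (g1 a) = c"
    using colour_permutation[of "g1 v1" k "g1 a" "g2 v2" c] a(2) c k by auto
  have "colorable (fst G, snd G) k"
  proof (rule colorable_glue[of "\<sigma> \<circ> g1" k g2])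
    show "(\<sigma> \<circ> g1) ` fst G1 \<subseteq> {..<k}"
      using g1(1) \<sigma>(2) by auto
    show "bichromatic (\<sigma> \<circ> g1) e" if "e \<in> snd G1 - {e1}" for e
      using g1(2) that bichromatic_comp_inj[OF \<sigma>(1)] by blast
    have "a \<noteq> v1"
      using a(2) by blast
    then show "bichromatic (glue (\<sigma> \<circ> g1) g2) e_star"
      by (rule glue_bichromatic_e_star[OF a(1) _ b]) (simp add: \<sigma>(4) c(3))
  qed (use g2 \<sigma>(3) in auto)
  then show ?thesis
    by simp
qed

lemma merge_e2_monochromatic:
  assumes nc2: "\<not> colorable G2 k" and f: "f ` fst G \<subseteq> {..<k}" and bi: "\<forall>d\<in>edges2. bichromatic f d"
  shows "\<forall>y\<in>e2. f (merge y) = f z"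
proof -
  have "bichromatic (f \<circ> merge) e" if "e \<in> snd G2 - {e2}" for e
  proof -
    have "bichromatic f (merge ` e)"
      using bi that unfolding edges2_def by blast
    then show ?thesis
      by (simp add: bichromatic_image)
  qed
  then have "\<not> bichromatic (f \<circ> merge) e2"
    using deleted_edge_monochromatic[OF nc2 merge_range2[OF f]] by blast
  then show ?thesis
    using not_bichromatic[of "f \<circ> merge" e2 v2] v2_in_e2 by simp
qed

text \<open>If G2 cannot be coloured, a colouring of the G2 side is constant on the merged e2, so
  e_star gets its second colour from e1.\<close>

lemma merge_e1_bichromatic:
  assumes nc2: "\<not> colorable G2 k" and h: "h ` fst G \<subseteq> {..<k}"
    and bi: "\<forall>d\<in>edges2. bichromatic h d" "bichromatic h e_star"
  shows "bichromatic (h \<circ> merge) e1"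
proof -
  have mono: "\<forall>y\<in>e2. h (merge y) = h z"
    by (rule merge_e2_monochromatic[OF nc2 h bi(1)])
  obtain x where x: "x \<in> e_star" "h x \<noteq> h z"
    using bichromatic_avoids[OF bi(2)] by blast
  have "x \<notin> e2 - {v2}"
  proof
    assume "x \<in> e2 - {v2}"
    then have "merge x = x"
      using merge_fixed2 edge_subset2[OF e2_edge] by blast
    then show False
      using mono x(2) \<open>x \<in> e2 - {v2}\<close> by force
  qed
  then have "x \<in> e1" "x \<noteq> v1"
    using x e_star_bounds(3) by blast+
  moreover have "merge x = x"
    using calculation edge_subset1[OF e1_edge] merge_fixed1 by blast
  ultimately show ?thesis
    using x(2) v1_in_e1 unfolding bichromatic_def by (metis comp_apply merge_v1)
qed

lemma colorable_G1_minus_e1: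
  assumes "colorable (delete_edge G e_star) k"
  shows "colorable (delete_edge G1 e1) k"
proof -
  obtain f where f: "f ` fst G \<subseteq> {..<k}" "\<forall>d\<in>snd G - {e_star}. bichromatic f d"
    using assms unfolding colorable_iff_bichromatic by auto
  have "bichromatic (f \<circ> merge) e" if "e \<in> snd G1 - {e1}" for e
  proof -
    have "merge ` e \<in> snd G - {e_star}"
      using that e_star_notin_edges1 unfolding edges_G edges1_def by blast
    then have "bichromatic f (merge ` e)"
      using f(2) by blast
    then show ?thesis
      by (simp add: bichromatic_image)
  qed
  then show ?thesis
    using merge_range1[OF f(1)] unfolding colorable_iff_bichromatic
    by (intro exI[of _ "f \<circ> merge"]) auto
qed

lemma colorable_G1_minus_edge:
  assumes nc2: "\<not> colorable G2 k" and e: "e \<in> snd G1" "e \<noteq> e1"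
    and col: "colorable (delete_edge G (merge ` e)) k"
  shows "colorable (delete_edge G1 e) k"
proof -
  obtain h where h: "h ` fst G \<subseteq> {..<k}" "\<forall>d\<in>snd G - {merge ` e}. bichromatic h d"
    using col unfolding colorable_iff_bichromatic by auto
  have e_edges1: "merge ` e \<in> edges1"
    using e unfolding edges1_def by blast
  then have "e_star \<noteq> merge ` e"
    using e_star_notin_edges1 by metis
  then have "bichromatic h e_star"
    using h(2) unfolding edges_G by blast
  moreover have "\<forall>d\<in>edges2. bichromatic h d"
  proof
    fix d assume "d \<in> edges2"
    then have "d \<in> snd G - {merge ` e}"
      using e_edges1 edges_disjoint unfolding edges_G by auto
    then show "bichromatic h d"
      using h(2) by blast
  qed
  ultimately have "bichromatic (h \<circ> merge) e1"
    using merge_e1_bichromatic[OF nc2 h(1)] by blast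
  moreover have "bichromatic (h \<circ> merge) e'" if "e' \<in> snd G1 - {e, e1}" for e'
  proof -
    have "merge ` e' \<noteq> merge ` e"
      using that e(1) merge_image_inj1 edge_subset1 by (metis DiffE insertCI)
    then have "merge ` e' \<in> snd G - {merge ` e}"
      using that unfolding edges_G edges1_def by blast
    then have "bichromatic h (merge ` e')"
      using h(2) by blast
    then show ?thesis
      by (simp add: bichromatic_image)
  qed
  ultimately show ?thesis
    using merge_range1[OF h(1)] unfolding colorable_iff_bichromatic
    by (intro exI[of _ "h \<circ> merge"]) auto
qed

lemma colorable_G1_minus_edges:
  assumes nc2: "\<not> colorable G2 k" and del: "\<forall>d\<in>snd G. colorable (delete_edge G d) k"
  shows "\<forall>e\<in>snd G1. colorable (delete_edge G1 e) k"
proof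
  fix e assume e: "e \<in> snd G1"
  show "colorable (delete_edge G1 e) k"
  proof (cases "e = e1")
    case True
    then show ?thesis
      using colorable_G1_minus_e1 del unfolding edges_G by blast
  next
    case False
    have "merge ` e \<in> snd G"
      using e False unfolding edges_G edges1_def by blast
    then show ?thesis
      using colorable_G1_minus_edge[OF nc2 e False] del by blast
  qed
qed

lemma not_colorable_G1:
  assumes k: "3 \<le> k" and nc: "\<not> colorable G k" and col: "colorable (delete_edge G e_star) k"
  shows "\<not> colorable G1 k"
proof
  assume "colorable G1 k"
  then obtain g1 where g1: "g1 ` fst G1 \<subseteq> {..<k}" "\<forall>e\<in>snd G1. bichromatic g1 e"
    unfolding colorable_iff_bichromatic by auto
  obtain h where h: "h ` fst G \<subseteq> {..<k}" "\<forall>d\<in>snd G - {e_star}. bichromatic h d"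
    using col unfolding colorable_iff_bichromatic by auto
  have "bichromatic (h \<circ> merge) e" if "e \<in> snd G2 - {e2}" for e
  proof -
    have "merge ` e \<in> snd G - {e_star}"
      using that e_star_notin_edges2 unfolding edges_G edges2_def by blast
    then have "bichromatic h (merge ` e)"
      using h(2) by blast
    then show ?thesis
      by (simp add: bichromatic_image)
  qed
  then have "colorable G k"
    using colorable_G_of_colourings[OF k g1 merge_range2[OF h(1)]] by blast
  with nc show False ..
qed

definition merge_edge :: "'a set \<Rightarrow> 'a set" where
  "merge_edge e = (if e = e1 then e_star else merge ` e)"

lemma collapse_vertex: "collapse y \<in> fst G1"
  unfolding collapse_def using v1_vertex by auto

lemma collapse_e_star: "t \<in> e_star \<Longrightarrow> collapse t \<in> e1"
proof (cases "t \<in> fst G1 - {v1}")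
  case True
  assume "t \<in> e_star"
  then have "t \<in> e1"
    using True e_star_bounds(3) z_notin1 vertices_disjoint edge_subset2[OF e2_edge] by blast
  then show ?thesis
    using True unfolding collapse_def by simp
next
  case False
  then show ?thesis
    using v1_in_e1 unfolding collapse_def by auto
qed

lemma collapse_edge:
  assumes "d \<in> snd G"
  shows "(\<exists>e\<in>snd G1. merge_edge e = d \<and> collapse ` d \<subseteq> e) \<or> collapse ` d \<subseteq> {v1}"
proof -
  have "d \<in> edges1 \<or> d \<in> edges2 \<or> d = e_star"
    using assms unfolding edges_G by blast
  then consider (one) e where "e \<in> snd G1" "e \<noteq> e1" "d = merge ` e" | (two) "d \<in> edges2"
    | (star) "d = e_star"
    unfolding edges1_def by blast
  then show ?thesis
  proof cases
    case one
    have "collapse (merge t) = t" if "t \<in> e" for t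
      using that edge_subset1[OF one(1)] collapse_merge by blast
    then have "collapse ` d \<subseteq> e"
      using one(3) by auto
    moreover have "merge_edge e = d"
      using one(2,3) unfolding merge_edge_def by simp
    ultimately show ?thesis
      using one(1) by blast
  next
    case two
    have "t \<notin> fst G1 - {v1}" if "t \<in> d" for t
      using that two edges2_subset z_notin1 vertices_disjoint by blast
    then have "collapse ` d \<subseteq> {v1}"
      unfolding collapse_def by auto
    then show ?thesis ..
  next
    case star
    then have "collapse ` d \<subseteq> e1" "merge_edge e1 = d"
      using collapse_e_star unfolding merge_edge_def by auto
    then show ?thesis
      using e1_edge by blast
  qed
qed

lemma no_isolated_vertex_G1:
  assumes cov: "\<forall>y\<in>fst G. \<exists>d\<in>snd G. y \<in> d"
  shows "\<forall>x\<in>fst G1. \<exists>e\<in>snd G1. x \<in> e"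
proof
  fix x assume x: "x \<in> fst G1"
  show "\<exists>e\<in>snd G1. x \<in> e"
  proof (cases "x = v1")
    case True
    then show ?thesis
      using e1_edge v1_in_e1 by blast
  next
    case False
    then have "merge x = x" "collapse x = x"
      using x merge_fixed1 unfolding collapse_def by auto
    then have "x \<in> fst G"
      using merge_in_G1[OF x] by simp
    then obtain d where d: "d \<in> snd G" "x \<in> d"
      using cov by blast
    then have x_img: "x \<in> collapse ` d"
      using \<open>collapse x = x\<close> by (metis imageI)
    from collapse_edge[OF d(1)] show ?thesis
    proof
      assume "\<exists>e\<in>snd G1. merge_edge e = d \<and> collapse ` d \<subseteq> e"
      then show ?thesis
        using x_img by blast
    next
      assume "collapse ` d \<subseteq> {v1}"
      then show ?thesis
        using x_img False by blast
    qed
  qed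
qed

lemma local_lambda_G_le_collapse:
  assumes "collapse u \<noteq> collapse w"
  shows "local_lambda G u w \<le> local_lambda G1 (collapse u) (collapse w)"
proof (rule local_lambda_mono_edge_map[where \<pi> = collapse and \<phi> = "\<lambda>d. {e \<in> snd G1. merge_edge e = d}",
      OF hypergraph1 assms collapse_vertex])
  show "linked {e \<in> snd G1. merge_edge e = d} (collapse x) (collapse y)"
    if "d \<in> snd G" "x \<in> d" "y \<in> d" for d x y
  proof -
    from collapse_edge[OF that(1)] show ?thesis
    proof
      assume "\<exists>e\<in>snd G1. merge_edge e = d \<and> collapse ` d \<subseteq> e"
      then obtain e where "e \<in> snd G1" "merge_edge e = d" "collapse ` d \<subseteq> e"
        by blast
      then show ?thesis
        using that(2,3) by (intro linked_edge[of e]) blast+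
    next
      assume "collapse ` d \<subseteq> {v1}"
      then have "collapse x = v1" "collapse y = v1"
        using that(2,3) by blast+
      then show ?thesis
        by simp
    qed
  qed
qed auto

lemma z_linked_to_e2:
  assumes "\<not> colorable G2 k" "colorable (delete_edge G2 e2) k" "2 \<le> k"
  obtains b where "b \<in> e2" "b \<noteq> v2" "linked edges2 z b"
proof -
  obtain b where b: "b \<in> e2" "b \<noteq> v2" "linked (snd G2 - {e2}) v2 b"
    using critical_edge_linked[OF hypergraph2 e2_edge v2_in_e2 assms] .
  have "linked edges2 (merge v2) (merge b)"
  proof (rule linked_map[OF b(3)])
    show "linked edges2 (merge x) (merge y)" if "d \<in> snd G2 - {e2}" "x \<in> d" "y \<in> d" for d x y
      using that unfolding edges2_def by (intro linked_edge) auto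
  qed
  moreover have "merge b = b"
    using b(1,2) merge_fixed2 edge_subset2[OF e2_edge] by blast
  ultimately show thesis
    using that b(1,2) by simp
qed

lemma merged_e1_linked:
  assumes b: "b \<in> e2" "b \<noteq> v2" "linked edges2 z b" and xy: "x \<in> e1" "y \<in> e1"
  shows "linked (insert e_star edges2) (merge x) (merge y)"
proof -
  have "linked (insert e_star edges2) (merge t) b" if "t \<in> e1" for t
  proof (cases "t = v1")
    case True
    then show ?thesis
      using linked_mono[OF b(3)] by auto
  next
    case False
    have "t \<in> fst G1"
      using that edge_subset1[OF e1_edge] by blast
    then have "merge t \<in> e_star"
      using that False merge_fixed1 e_star_bounds(1) by auto
    moreover have "b \<in> e_star"
      using b(1,2) e_star_bounds(2) by blast
    ultimately show ?thesis
      by (intro linked_edge) auto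
  qed
  then show ?thesis
    using linked_trans linked_sym xy by metis
qed

text \<open>A hyperpath of G1 through e1 is rerouted through e_star and a path of the G2 side from z
  to e_star.\<close>

lemma local_lambda_G1_le:
  assumes b: "b \<in> e2" "b \<noteq> v2" "linked edges2 z b"
    and uw: "u \<in> fst G1" "w \<in> fst G1" "u \<noteq> w"
  shows "local_lambda G1 u w \<le> local_lambda G (merge u) (merge w)"
proof (rule local_lambda_mono_edge_map[where
      \<phi> = "\<lambda>e. if e = e1 then insert e_star edges2 else {merge ` e}", OF hypergraph_G])
  show "merge u \<noteq> merge w"
    using uw collapse_merge[of u] collapse_merge[of w] by auto
  show "merge u \<in> fst G"
    using uw(1) by (rule merge_in_G1)
  show "(if e = e1 then insert e_star edges2 else {merge ` e}) \<subseteq> snd G" if "e \<in> snd G1" for e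
    using that unfolding edges_G edges1_def by auto
  have outside: "merge ` d \<notin> insert e_star edges2" if "d \<in> snd G1 - {e1}" for d
  proof -
    have "merge ` d \<in> edges1"
      using that unfolding edges1_def by blast
    then show ?thesis
      using e_star_notin_edges1 edges_disjoint by (metis disjoint_iff insert_iff)
  qed
  show "(if e = e1 then insert e_star edges2 else {merge ` e}) \<inter>
      (if e' = e1 then insert e_star edges2 else {merge ` e'}) = {}"
    if e: "e \<in> snd G1" "e' \<in> snd G1" "e \<noteq> e'" for e e'
  proof -
    consider "e = e1" | "e' = e1" | "e \<noteq> e1" "e' \<noteq> e1"
      by blast
    then show ?thesis
    proof cases
      case 1
      then show ?thesis
        using outside[of e'] e by simp
    next
      case 2
      then show ?thesis
        using outside[of e] e by simp
    next
      case 3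
      have "merge ` e \<noteq> merge ` e'"
        using e merge_image_inj1 edge_subset1 by metis
      then show ?thesis
        using 3 by simp
    qed
  qed
  show "linked (if e = e1 then insert e_star edges2 else {merge ` e}) (merge x) (merge y)"
    if "e \<in> snd G1" "x \<in> e" "y \<in> e" for e x y
    using that merged_e1_linked[OF b] by (auto intro: linked_edge)
qed

lemma hlambda_G1_le:
  assumes nc2: "\<not> colorable G2 k" and del2: "colorable (delete_edge G2 e2) k" and k: "2 \<le> k"
    and lam: "hlambda G \<le> k"
  shows "hlambda G1 \<le> k"
proof -
  obtain b where b: "b \<in> e2" "b \<noteq> v2" "linked edges2 z b"
    using z_linked_to_e2[OF nc2 del2 k] .
  have "local_lambda G1 u w \<le> k" if uw: "u \<in> fst G1" "w \<in> fst G1" "u \<noteq> w" for u w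
  proof -
    have "merge u \<noteq> merge w"
      using uw collapse_merge[of u] collapse_merge[of w] by auto
    then have "local_lambda G (merge u) (merge w) \<le> k"
      using lam merge_in_G1 uw unfolding hlambda_le_iff[OF hypergraph_G] by blast
    then show ?thesis
      using local_lambda_G1_le[OF b uw] by linarith
  qed
  then show ?thesis
    unfolding hlambda_le_iff[OF hypergraph1] by blast
qed

lemma colorable_G_minus_merged_edge:
  assumes del1: "colorable (delete_edge G1 e) k" and e: "e \<in> snd G1" "e \<noteq> e1"
    and nc2: "\<not> colorable G2 k" and del2: "colorable (delete_edge G2 e2) k"
  shows "colorable (delete_edge G (merge ` e)) k"
proof -
  obtain g1 where g1: "g1 ` fst G1 \<subseteq> {..<k}" "\<forall>e'\<in>snd G1 - {e}. bichromatic g1 e'"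
    using del1 unfolding colorable_iff_bichromatic by auto
  obtain g2 where g2: "g2 ` fst G2 \<subseteq> {..<k}" "\<forall>e'\<in>snd G2 - {e2}. bichromatic g2 e'"
    using del2 unfolding colorable_iff_bichromatic by auto
  have mono2: "\<not> bichromatic g2 e2"
    using deleted_edge_monochromatic[OF nc2 g2] .
  obtain a where a: "a \<in> e1" "g1 a \<noteq> g1 v1"
    using bichromatic_avoids g1(2) e1_edge e(2) by blast
  obtain b where b: "b \<in> e2" "b \<noteq> v2"
    using hypergraph_edge_other_vertex[OF hypergraph2 e2_edge] .
  \<comment> \<open>after aligning the colours at v1 and v2, e_star sees the two colours of e1\<close>
  define \<sigma> where "\<sigma> = transpose (g1 v1) (g2 v2)"
  have "g1 v1 < k" "g2 v2 < k"
    using g1(1) g2(1) v1_vertex v2_vertex by auto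
  then have \<sigma>_range: "(\<sigma> \<circ> g1) ` fst G1 \<subseteq> {..<k}"
    using g1(1) transpose_less unfolding \<sigma>_def by fastforce
  show ?thesis
  proof (rule colorable_glue[OF \<sigma>_range g2(1)])
    show "(\<sigma> \<circ> g1) v1 = g2 v2"
      unfolding \<sigma>_def by simp
    show "bichromatic (\<sigma> \<circ> g1) e'" if "e' \<in> snd G1 - {e1}" "merge ` e' \<in> snd G - {merge ` e}" for e'
    proof -
      have "e' \<noteq> e"
        using that(2) by blast
      then show ?thesis
        using g1(2) that(1) bichromatic_comp_inj[OF inj_transpose] unfolding \<sigma>_def by blast
    qed
    show "bichromatic g2 e'" if "e' \<in> snd G2 - {e2}" for e'
      using g2(2) that by blast
    have "a \<noteq> v1"
      using a(2) by blast
    moreover have "(\<sigma> \<circ> g1) a \<noteq> g2 b"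
    proof
      assume "(\<sigma> \<circ> g1) a = g2 b"
      then have "\<sigma> (g1 a) = \<sigma> (g1 v1)"
        using not_bichromatic[OF mono2 v2_in_e2 b(1)] unfolding \<sigma>_def by simp
      then show False
        using a(2) transpose_eq_imp_eq unfolding \<sigma>_def by metis
    qed
    ultimately show "bichromatic (glue (\<sigma> \<circ> g1) g2) e_star"
      using glue_bichromatic_e_star[OF a(1) _ b] by blast
  qed auto
qed

lemma side1_covered:
  assumes nc1: "\<not> colorable G1 k" and del1: "\<forall>e\<in>snd G1. colorable (delete_edge G1 e) k"
    and cov1: "\<forall>x\<in>fst G1. \<exists>e\<in>snd G1. x \<in> e" and k: "2 \<le> k"
  shows "\<forall>y\<in>insert z (fst G1 - {v1}). \<exists>d\<in>snd G. y \<in> d"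
proof
  fix y assume "y \<in> insert z (fst G1 - {v1})"
  then consider "y = z" | "y \<in> fst G1" "y \<noteq> v1"
    by blast
  then show "\<exists>d\<in>snd G. y \<in> d"
  proof cases
    case 1
    \<comment> \<open>v1 lies in a second edge of G1, which survives the join and contains z\<close>
    obtain e where e: "e \<in> snd G1" "e \<noteq> e1" "v1 \<in> e"
      using critical_vertex_in_two_edges[OF hypergraph1 nc1 del1[rule_format, OF e1_edge] e1_edge v1_in_e1 k] .
    then have "merge ` e \<in> snd G"
      unfolding edges_G edges1_def by blast
    moreover have "z \<in> merge ` e"
      using e(3) merge_v1 by (metis imageI)
    ultimately show ?thesis
      using 1 by blast
  next
    case 2
    obtain e where e: "e \<in> snd G1" "y \<in> e"
      using cov1 2(1) by blast
    show ?thesis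
    proof (cases "e = e1")
      case True
      then have "y \<in> e_star"
        using e(2) 2(2) e_star_bounds(1) by blast
      then show ?thesis
        unfolding edges_G by blast
    next
      case False
      then have "merge ` e \<in> snd G"
        using e(1) unfolding edges_G edges1_def by blast
      moreover have "y \<in> merge ` e"
        using e(2) merge_fixed1[OF 2] by (metis imageI)
      ultimately show ?thesis
        by blast
    qed
  qed
qed

end

context hajos
begin

lemma not_colorable_G:
  assumes nc1: "\<not> colorable G1 k" and nc2: "\<not> colorable G2 k"
  shows "\<not> colorable G k"
proof
  assume "colorable G k"
  then obtain f where f: "f ` fst G \<subseteq> {..<k}" "\<forall>d\<in>snd G. bichromatic f d"
    unfolding colorable_iff_bichromatic by blast
  have "\<forall>d\<in>edges1. bichromatic f d" "\<forall>d\<in>edges2. bichromatic f d" "bichromatic f e_star"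
    using f(2) unfolding edges_G by blast+
  then have "\<forall>y\<in>e1. f (merge y) = f z" "bichromatic (f \<circ> merge) e1"
    using swapped.merge_e2_monochromatic[OF nc1 f(1), unfolded swapped_edges swapped_merge]
      merge_e1_bichromatic[OF nc2 f(1)] by blast+
  then show False
    unfolding bichromatic_def by auto
qed

lemma colorable_G_minus_e_star:
  assumes del1: "colorable (delete_edge G1 e1) k" and del2: "colorable (delete_edge G2 e2) k"
  shows "colorable (delete_edge G e_star) k"
proof -
  obtain g1 where g1: "g1 ` fst G1 \<subseteq> {..<k}" "\<forall>e\<in>snd G1 - {e1}. bichromatic g1 e"
    using del1 unfolding colorable_iff_bichromatic by auto
  obtain g2 where g2: "g2 ` fst G2 \<subseteq> {..<k}" "\<forall>e\<in>snd G2 - {e2}. bichromatic g2 e"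
    using del2 unfolding colorable_iff_bichromatic by auto
  define \<sigma> where "\<sigma> = transpose (g1 v1) (g2 v2)"
  have "g1 v1 < k" "g2 v2 < k"
    using g1(1) g2(1) v1_vertex v2_vertex by auto
  then have \<sigma>_range: "(\<sigma> \<circ> g1) ` fst G1 \<subseteq> {..<k}"
    using g1(1) transpose_less unfolding \<sigma>_def by fastforce
  show ?thesis
  proof (rule colorable_glue[OF \<sigma>_range g2(1)])
    show "(\<sigma> \<circ> g1) v1 = g2 v2"
      unfolding \<sigma>_def by simp
    show "bichromatic (\<sigma> \<circ> g1) e" if "e \<in> snd G1 - {e1}" for e
      using g1(2) that bichromatic_comp_inj[OF inj_transpose] unfolding \<sigma>_def by blast
    show "bichromatic g2 e" if "e \<in> snd G2 - {e2}" for e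
      using g2(2) that by blast
  qed auto
qed

lemma colorable_G_minus_edges:
  assumes nc1: "\<not> colorable G1 k" and del1: "\<forall>e\<in>snd G1. colorable (delete_edge G1 e) k"
    and nc2: "\<not> colorable G2 k" and del2: "\<forall>e\<in>snd G2. colorable (delete_edge G2 e) k"
  shows "\<forall>d\<in>snd G. colorable (delete_edge G d) k"
proof
  fix d assume "d \<in> snd G"
  then consider (one) e where "e \<in> snd G1" "e \<noteq> e1" "d = merge ` e"
    | (two) e where "e \<in> snd G2" "e \<noteq> e2" "d = merge ` e" | (star) "d = e_star"
    unfolding edges_G edges1_def edges2_def by blast
  then show "colorable (delete_edge G d) k"
  proof cases
    case one
    then show ?thesis
      using colorable_G_minus_merged_edge[OF _ one(1,2) nc2] del1 del2 e2_edge by simp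
  next
    case two
    then show ?thesis
      using swapped.colorable_G_minus_merged_edge[OF _ two(1,2) nc1] del1 del2 e1_edge
      unfolding swapped_merge by simp
  next
    case star
    then show ?thesis
      using colorable_G_minus_e_star del1 del2 e1_edge e2_edge by simp
  qed
qed

lemma collapse_separates:
  assumes "u \<in> fst G" "w \<in> fst G" "u \<noteq> w"
  shows "collapse u \<noteq> collapse w \<or> swapped.collapse u \<noteq> swapped.collapse w"
  using assms z_notin1 z_notin2 unfolding collapse_def swapped.collapse_def vertices_G by auto

lemma hlambda_G_le:
  assumes lam1: "hlambda G1 \<le> k" and lam2: "hlambda G2 \<le> k"
  shows "hlambda G \<le> k"
proof -
  have "local_lambda G u w \<le> k" if uw: "u \<in> fst G" "w \<in> fst G" "u \<noteq> w" for u w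
    using collapse_separates[OF uw]
  proof
    assume neq: "collapse u \<noteq> collapse w"
    have "local_lambda G u w \<le> local_lambda G1 (collapse u) (collapse w)"
      by (rule local_lambda_G_le_collapse[OF neq])
    also have "\<dots> \<le> k"
      using lam1 collapse_vertex neq unfolding hlambda_le_iff[OF hypergraph1] by blast
    finally show ?thesis .
  next
    assume neq: "swapped.collapse u \<noteq> swapped.collapse w"
    have "local_lambda G u w \<le> local_lambda G2 (swapped.collapse u) (swapped.collapse w)"
      by (rule swapped.local_lambda_G_le_collapse[OF neq])
    also have "\<dots> \<le> k"
      using lam2 swapped.collapse_vertex neq unfolding hlambda_le_iff[OF hypergraph2] by blast
    finally show ?thesis .
  qed
  then show ?thesis
    unfolding hlambda_le_iff[OF hypergraph_G] by blast
qed

lemma G1_in_class_C: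
  assumes k: "3 \<le> k" and G: "G \<in> class_C k"
  shows "G1 \<in> class_C k"
proof -
  have nc: "\<not> colorable G k" and del: "\<forall>d\<in>snd G. colorable (delete_edge G d) k"
    and cov: "\<forall>y\<in>fst G. \<exists>d\<in>snd G. y \<in> d" and lam: "hlambda G \<le> k"
    using G critical_iff[OF hypergraph_G, of k] k unfolding class_C_def by auto
  have del_star: "colorable (delete_edge G e_star) k"
    using del unfolding edges_G by blast
  have nc2: "\<not> colorable G2 k"
    using swapped.not_colorable_G1[OF k nc] del_star unfolding swapped_e_star by blast
  have del2: "colorable (delete_edge G2 e2) k"
    using swapped.colorable_G1_minus_e1 del_star unfolding swapped_e_star by blast
  show ?thesis
    using not_colorable_G1[OF k nc del_star] colorable_G1_minus_edges[OF nc2 del]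
      no_isolated_vertex_G1[OF cov] hlambda_G1_le[OF nc2 del2 _ lam] k
      critical_iff[OF hypergraph1, of k] hypergraph1
    unfolding class_C_def by auto
qed

lemma G_in_class_C:
  assumes k: "2 \<le> k" and G1: "G1 \<in> class_C k" and G2: "G2 \<in> class_C k"
  shows "G \<in> class_C k"
proof -
  have nc1: "\<not> colorable G1 k" and del1: "\<forall>e\<in>snd G1. colorable (delete_edge G1 e) k"
    and cov1: "\<forall>x\<in>fst G1. \<exists>e\<in>snd G1. x \<in> e" and lam1: "hlambda G1 \<le> k"
    using G1 critical_iff[OF hypergraph1, of k] k unfolding class_C_def by auto
  have nc2: "\<not> colorable G2 k" and del2: "\<forall>e\<in>snd G2. colorable (delete_edge G2 e) k"
    and cov2: "\<forall>x\<in>fst G2. \<exists>e\<in>snd G2. x \<in> e" and lam2: "hlambda G2 \<le> k"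
    using G2 critical_iff[OF hypergraph2, of k] k unfolding class_C_def by auto
  have "\<forall>y\<in>fst G. \<exists>d\<in>snd G. y \<in> d"
    using side1_covered[OF nc1 del1 cov1 k] swapped.side1_covered[OF nc2 del2 cov2 k]
    unfolding vertices_G by blast
  then show ?thesis
    using not_colorable_G[OF nc1 nc2] colorable_G_minus_edges[OF nc1 del1 nc2 del2]
      hlambda_G_le[OF lam1 lam2] critical_iff[OF hypergraph_G, of k] hypergraph_G k
    unfolding class_C_def by auto
qed

end

theorem claim2:
  fixes k :: nat and G1 G2 G :: "'a hgraph" and v1 v2 vs :: 'a and e1 e2 :: "'a set"
  assumes "k \<ge> 3"
    and "hypergraph G1" and "hypergraph G2"
    and "hajos_join G1 v1 e1 G2 v2 e2 vs G"
  shows "G \<in> class_C k \<longleftrightarrow> G1 \<in> class_C k \<and> G2 \<in> class_C k"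
proof -
  interpret hajos G1 G2 G v1 v2 vs e1 e2
    using assms(2-4) by unfold_locales
  have "2 \<le> k"
    using assms(1) by simp
  then show ?thesis
    using G1_in_class_C[OF assms(1)] swapped.G1_in_class_C[OF assms(1)] G_in_class_C by blast
qed

end
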